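(* Let $\mathcal{U}$ be a free ultrafilter on $\mathbb{N}$. If $\{2^{(2^k)} : k \in \mathbb{N},\ k \text{ odd}\} \in \mathcal{U}$, then $$\alpha - \sqrt{\alpha} \;<\; \mathrm{num}_{\mathcal{U}}(\mathbb{S}) \;<\; \alpha - \sqrt{\alpha} + \alpha^{1/4}.$$ If $\{2^{(2^k)} : k \in \mathbb{N},\ k \text{ even}\} \in \mathcal{U}$, then $$\sqrt{\alpha} - \alpha^{1/4} \;<\; \mathrm{num}_{\mathcal{U}}(\mathbb{S}) \;<\; \sqrt{\alpha}.$$
   Context: $\mathbb{N} = \{1,2,3,\ldots\}$; for $S \subseteq \mathbb{N}$, $f_n(S) = |S \cap \{1,\ldots,n\}|$. The set $\mathbb{S}$ is defined by: $n \in \mathbb{S}$ iff $n \geq 2$ and $\lceil \log_2(\log_2 n)\rceil$ is odd. Given a free ultrafilter $\mathcal{U}$ on $\mathbb{N}$, let ${}^*\mathbb{R} = \mathbb{R}^{\mathbb{N}}/\mathcal{U}$ be the ultrapower: elements are classes $[(x_n)]$ of real sequences with $[(x_n)] = [(y_n)]$ iff $\{n : x_n = y_n\} \in \mathcal{U}$, operations componentwise, and $[(x_n)] < [(y_n)]$ iff $\{n : x_n < y_n\} \in \mathcal{U}$. Set $\alpha = [(n)_n]$, $\sqrt{\alpha} = [(n^{1/2})_n]$, $\alpha^{1/4} = [(n^{1/4})_n]$, and $\mathrm{num}_{\mathcal{U}}(S) = [(f_n(S))_n]$ (the $\alpha$-numerosity of $S$). *)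

theory Defs
  imports Complex_Main
begin

definition free_ultrafilter :: "nat set set \<Rightarrow> bool" where
  "free_ultrafilter U \<longleftrightarrow>
     {} \<notin> U \<and> UNIV \<in> U \<and>
     (\<forall>A B. A \<in> U \<and> A \<subseteq> B \<longrightarrow> B \<in> U) \<and>
     (\<forall>A B. A \<in> U \<and> B \<in> U \<longrightarrow> A \<inter> B \<in> U) \<and>
     (\<forall>A. A \<in> U \<or> - A \<in> U) \<and>
     (\<forall>A. finite A \<longrightarrow> A \<notin> U)"

text \<open>Order of the ultrapower R^N/U on representing sequences:
  [x] < [y] iff the set of indices n with x n < y n belongs to U.\<close>
definition ult_less :: "nat set set \<Rightarrow> (nat \<Rightarrow> real) \<Rightarrow> (nat \<Rightarrow> real) \<Rightarrow> bool" where
  "ult_less U x y \<longleftrightarrow> {n. x n < y n} \<in> U"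

definition count_upto :: "nat set \<Rightarrow> nat \<Rightarrow> nat" where
  "count_upto S n = card (S \<inter> {1..n})"

definition setS :: "nat set" where
  "setS = {n. n \<ge> 2 \<and> odd (\<lceil>log 2 (log 2 (real n))\<rceil>)}"

text \<open>alpha-numerosity of S, as a representing sequence.\<close>
definition num_seq :: "nat set \<Rightarrow> nat \<Rightarrow> real" where
  "num_seq S = (\<lambda>n. real (count_upto S n))"

end

theory Submission imports Defs begin

text \<open>With \<open>tower k = 2^(2^k)\<close>, the value \<open>\<lceil>log 2 (log 2 m)\<rceil>\<close> is \<open>k + 1\<close> on the whole block
  \<open>tower k < m \<le> tower (k + 1)\<close>, so \<open>setS\<close> consists of every other block.  Hence for odd \<open>k\<close>
  the count of \<open>setS\<close> up to \<open>tower k\<close> is the alternating sum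
  \<open>tower k - tower (k - 1) + tower (k - 2) - \<dots>\<close>, and for even \<open>k\<close> it is the count up to
  \<open>tower (k - 1)\<close>.  As \<open>sqrt (tower (k + 1)) = tower k\<close>, the two leading terms are
  \<open>\<alpha> - sqrt \<alpha>\<close> for \<open>\<alpha> = tower k\<close> with \<open>k\<close> odd and \<open>sqrt \<alpha> - \<alpha> powr (1/4)\<close> with \<open>k\<close> even,
  while the tail is positive and smaller than the next term.  An ultrafilter containing
  these towers is free, so finitely many small exceptions do not matter.\<close>

definition tower :: "nat \<Rightarrow> nat" where
  "tower k = 2 ^ 2 ^ k"

lemma tower_Suc: "tower (Suc k) = tower k * tower k"
  by (simp add: tower_def power_mult[symmetric] power2_eq_square[symmetric] mult.commute)

lemma tower_ge_2: "tower k \<ge> 2"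
  using power_increasing[of 1 "2 ^ k" "2::nat"] by (simp add: tower_def)

lemma strict_mono_tower: "strict_mono tower"
  by (rule strict_mono_Suc_iff[THEN iffD2]) (simp add: tower_def)

lemma log_log_tower: "log 2 (log 2 (real (tower k))) = k"
  by (simp add: tower_def log_nat_power)

lemma ceiling_log_log_eq:
  assumes "tower k < m" "m \<le> tower (Suc k)"
  shows "\<lceil>log 2 (log 2 (real m))\<rceil> = int (Suc k)"
proof -
  have "tower k > 1" using tower_ge_2[of k] by simp
  have loglog_less: "log 2 (log 2 x) < log 2 (log 2 y)" if "1 < x" "x < y" for x y :: real
    using that by simp
  have loglog_le: "log 2 (log 2 x) \<le> log 2 (log 2 y)" if "1 < x" "x \<le> y" for x y :: real
    using that by simp
  have "real k < log 2 (log 2 (real m))"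
    using loglog_less[of "real (tower k)" "real m"] assms \<open>tower k > 1\<close>
    by (simp add: log_log_tower)
  moreover have "log 2 (log 2 (real m)) \<le> real (Suc k)"
    using loglog_le[of "real m" "real (tower (Suc k))"] assms \<open>tower k > 1\<close>
    by (simp only: log_log_tower)
  ultimately show ?thesis by (subst ceiling_eq_iff) auto
qed

lemma setS_block_iff:
  assumes "tower k < m" "m \<le> tower (Suc k)"
  shows "m \<in> setS \<longleftrightarrow> even k"
  using ceiling_log_log_eq[OF assms] assms tower_ge_2[of k] unfolding setS_def by simp

lemma count_upto_split:
  assumes "m \<le> n"
  shows "count_upto S n = count_upto S m + card (S \<inter> {m<..n})"
proof -
  have "S \<inter> {1..n} = (S \<inter> {1..m}) \<union> (S \<inter> {m<..n})" using assms by auto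
  moreover have "card (S \<inter> {1..m} \<union> S \<inter> {m<..n}) = card (S \<inter> {1..m}) + card (S \<inter> {m<..n})"
    by (rule card_Un_disjoint) auto
  ultimately show ?thesis unfolding count_upto_def by simp
qed

lemma count_setS_tower_0: "count_upto setS (tower 0) = 0"
proof -
  have "setS \<inter> {1..2} = {}" unfolding setS_def by (auto simp: le_Suc_eq)
  then show ?thesis by (simp add: count_upto_def tower_def)
qed

lemma count_setS_tower_Suc:
  "count_upto setS (tower (Suc k)) =
     count_upto setS (tower k) + (if even k then tower (Suc k) - tower k else 0)"
proof -
  have less: "tower k < tower (Suc k)" using strict_mono_tower by (simp add: strict_mono_def)
  have "setS \<inter> {tower k<..tower (Suc k)} = (if even k then {tower k<..tower (Suc k)} else {})"
    using setS_block_iff[of k] by auto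
  then show ?thesis using count_upto_split[of "tower k" "tower (Suc k)" setS] less by simp
qed

lemma count_setS_tower_bound: "count_upto setS (tower k) + 2 \<le> tower k"
proof (induction k)
  case 0
  then show ?case using count_setS_tower_0 by (simp add: tower_def)
next
  case (Suc k)
  have "tower k < tower (Suc k)" using strict_mono_tower by (simp add: strict_mono_def)
  with Suc show ?case by (simp add: count_setS_tower_Suc) linarith
qed

lemma count_setS_tower_pos: "1 \<le> k \<Longrightarrow> count_upto setS (tower k) > 0"
proof (induction k rule: dec_induct)
  case base
  then show ?case
    using count_setS_tower_Suc[of 0] count_setS_tower_0 by (simp add: tower_def)
next
  case (step k)
  then show ?case by (simp add: count_setS_tower_Suc)
qed

lemma count_setS_tower_odd:
  assumes "odd j"
  shows "real (count_upto setS (tower (Suc (Suc j)))) =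
           real (count_upto setS (tower j)) + real (tower (Suc (Suc j))) - real (tower (Suc j))"
proof -
  have "tower (Suc j) < tower (Suc (Suc j))" using strict_mono_tower by (simp add: strict_mono_def)
  with assms show ?thesis by (simp add: count_setS_tower_Suc)
qed

lemma sqrt_tower_Suc: "sqrt (real (tower (Suc k))) = real (tower k)"
  by (simp add: tower_Suc real_sqrt_mult)

lemma tower_Suc_Suc_powr_quarter: "real (tower (Suc (Suc k))) powr (1/4) = real (tower k)"
proof -
  have pos: "real (tower k) > 0" using tower_ge_2[of k] by simp
  have "real (tower (Suc (Suc k))) = real (tower k) powr 4"
    using pos by (simp add: tower_Suc powr_numeral power4_eq_xxxx)
  then have "real (tower (Suc (Suc k))) powr (1/4) = real (tower k) powr (4 * (1/4))"
    by (simp only: powr_powr)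
  then show ?thesis using pos by simp
qed

lemma num_seq_setS_tower_odd:
  assumes "odd k" "k \<ge> 3"
  defines "\<alpha> \<equiv> real (tower k)"
  shows "\<alpha> - sqrt \<alpha> < num_seq setS (tower k) \<and>
         num_seq setS (tower k) < \<alpha> - sqrt \<alpha> + \<alpha> powr (1/4)"
proof -
  obtain j where k: "k = Suc (Suc j)" and "odd j" "j \<ge> 1"
  proof
    show "k = Suc (Suc (k - 2))" "odd (k - 2)" "k - 2 \<ge> 1" using assms by auto
  qed
  then show ?thesis
    using count_setS_tower_odd[of j] count_setS_tower_pos[of j] count_setS_tower_bound[of j]
    by (simp add: \<alpha>_def num_seq_def sqrt_tower_Suc tower_Suc_Suc_powr_quarter)
qed

lemma num_seq_setS_tower_even:
  assumes "even k" "k \<ge> 4"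
  defines "\<alpha> \<equiv> real (tower k)"
  shows "sqrt \<alpha> - \<alpha> powr (1/4) < num_seq setS (tower k) \<and> num_seq setS (tower k) < sqrt \<alpha>"
proof -
  obtain j where k: "k = Suc (Suc (Suc j))" and "odd j" "j \<ge> 1"
  proof
    show "k = Suc (Suc (Suc (k - 3)))" "odd (k - 3)" "k - 3 \<ge> 1" using assms by auto
  qed
  moreover have "tower j < tower (Suc j)" using strict_mono_tower by (simp add: strict_mono_def)
  ultimately show ?thesis
    using count_setS_tower_odd[of j] count_setS_tower_pos[of j] count_setS_tower_bound[of j]
    by (simp add: \<alpha>_def num_seq_def count_setS_tower_Suc[of "Suc (Suc j)"]
        sqrt_tower_Suc tower_Suc_Suc_powr_quarter)
qed

lemma num_seq_setS_odd_towers: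
  assumes "n \<in> {2 ^ (2 ^ k) | k::nat. k \<ge> 1 \<and> odd k}" "n \<noteq> tower 1"
  shows "real n - sqrt (real n) < num_seq setS n \<and>
         num_seq setS n < real n - sqrt (real n) + real n powr (1/4)"
proof -
  obtain k where n: "n = tower k" and k: "odd k" "k \<ge> 1"
    using assms(1) unfolding tower_def by blast
  moreover have "k \<noteq> 1" using assms(2) n by blast
  ultimately have "k \<ge> 3" by presburger
  then show ?thesis using num_seq_setS_tower_odd[OF k(1)] n by simp
qed

lemma num_seq_setS_even_towers:
  assumes "n \<in> {2 ^ (2 ^ k) | k::nat. k \<ge> 1 \<and> even k}" "n \<noteq> tower 2"
  shows "sqrt (real n) - real n powr (1/4) < num_seq setS n \<and> num_seq setS n < sqrt (real n)"
proof -
  obtain k where n: "n = tower k" and k: "even k" "k \<ge> 1"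
    using assms(1) unfolding tower_def by blast
  moreover have "k \<noteq> 2" using assms(2) n by blast
  ultimately have "k \<ge> 4" by presburger
  then show ?thesis using num_seq_setS_tower_even[OF k(1)] n by simp
qed

lemma ult_lessI:
  assumes U: "free_ultrafilter U" and "A \<in> U" "finite F"
    and less: "\<And>n. n \<in> A \<Longrightarrow> n \<notin> F \<Longrightarrow> x n < y n"
  shows "ult_less U x y"
proof -
  from U have up: "\<And>A B. A \<in> U \<Longrightarrow> A \<subseteq> B \<Longrightarrow> B \<in> U"
    and inter: "\<And>A B. A \<in> U \<Longrightarrow> B \<in> U \<Longrightarrow> A \<inter> B \<in> U"
    and compl: "\<And>A. A \<in> U \<or> - A \<in> U"
    and cofinite: "\<And>A. finite A \<Longrightarrow> A \<notin> U"
    unfolding free_ultrafilter_def by simp_all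
  have "A \<inter> - F \<in> U" using inter[OF \<open>A \<in> U\<close>] compl[of F] cofinite[OF \<open>finite F\<close>] by blast
  moreover have "A \<inter> - F \<subseteq> {n. x n < y n}" using less by blast
  ultimately show ?thesis unfolding ult_less_def by (rule up)
qed

theorem mainTheorem5:
  fixes U :: "nat set set"
  assumes U: "free_ultrafilter U"
  shows "({2 ^ (2 ^ k) | k::nat. k \<ge> 1 \<and> odd k} \<in> U \<longrightarrow>
           ult_less U (\<lambda>n. real n - sqrt (real n)) (num_seq setS) \<and>
           ult_less U (num_seq setS) (\<lambda>n. real n - sqrt (real n) + real n powr (1/4)))
       \<and> ({2 ^ (2 ^ k) | k::nat. k \<ge> 1 \<and> even k} \<in> U \<longrightarrow>
           ult_less U (\<lambda>n. sqrt (real n) - real n powr (1/4)) (num_seq setS) \<and>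
           ult_less U (num_seq setS) (\<lambda>n. sqrt (real n)))"
proof (intro conjI impI)
  assume odd_towers: "{2 ^ (2 ^ k) | k::nat. k \<ge> 1 \<and> odd k} \<in> U"
  show "ult_less U (\<lambda>n. real n - sqrt (real n)) (num_seq setS)"
    "ult_less U (num_seq setS) (\<lambda>n. real n - sqrt (real n) + real n powr (1/4))"
    by (rule ult_lessI[OF U odd_towers, of "{tower 1}"]; use num_seq_setS_odd_towers in blast)+
next
  assume even_towers: "{2 ^ (2 ^ k) | k::nat. k \<ge> 1 \<and> even k} \<in> U"
  show "ult_less U (\<lambda>n. sqrt (real n) - real n powr (1/4)) (num_seq setS)"
    "ult_less U (num_seq setS) (\<lambda>n. sqrt (real n))"
    by (rule ult_lessI[OF U even_towers, of "{tower 2}"]; use num_seq_setS_even_towers in blast)+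
qed

end
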